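(* For all integers $p\ge2$, $k\ge1$ and $0\le h<k$ with $\gcd(h,k)=1$, $$\big|v^{(p)}_{h,k}\big|\le\frac{4\,k^{2p+1}\,(p+1)!}{p\,(2\pi)^{2p+2}}\,\zeta(p)\,\zeta(p+2).$$
   Context: $B_n(x)$ is the $n$-th Bernoulli polynomial and $B_n=B_n(0)$. For $p\ge1$, $v^{(p)}_{h,k}=\frac{(-1)^pk^{1+p}}{p!\,p\,(p+2)}\Big[B_{p+2}B_p+\frac{p}{(2i)^p}\sum_{d=1}^{k-1}B_{p+2}(d/k)\cot^{(p-1)}(\pi dh/k)\Big]$, where $\cot^{(p-1)}$ denotes the $(p-1)$-th derivative of the cotangent function (empty sum $=0$ for $k=1$). *)

theory Defs
  imports "HOL-Analysis.Analysis"
begin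

text \<open>Bernoulli numbers with the convention B_1 = -1/2, via the standard recurrence
  sum_{j=0}^{n} (n+1 choose j) B_j = 0 for n >= 1.\<close>
fun bernoulli_num :: "nat \<Rightarrow> real" where
  "bernoulli_num n =
     (if n = 0 then 1
      else - (\<Sum>j<n. real (Suc n choose j) * bernoulli_num j) / real (Suc n))"

definition bernoulli_poly :: "nat \<Rightarrow> real \<Rightarrow> real" where
  "bernoulli_poly n x = (\<Sum>j\<le>n. real (n choose j) * bernoulli_num j * x ^ (n - j))"

definition zeta_nat :: "nat \<Rightarrow> real" where
  "zeta_nat s = (\<Sum>n. 1 / real (Suc n) ^ s)"

definition cot_deriv :: "nat \<Rightarrow> real \<Rightarrow> real" where
  "cot_deriv m = (deriv ^^ m) cot"

definition v_coeff :: "nat \<Rightarrow> nat \<Rightarrow> nat \<Rightarrow> complex" where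
  "v_coeff p h k =
     complex_of_real ((-1) ^ p * real k ^ (1 + p) / (fact p * real p * real (p + 2))) *
     (complex_of_real (bernoulli_num (p + 2) * bernoulli_num p)
      + of_nat p / (2 * \<i>) ^ p *
        complex_of_real (\<Sum>d = 1..k - 1. bernoulli_poly (p + 2) (real d / real k) *
                            cot_deriv (p - 1) (pi * real d * real h / real k)))"

end

theory Submission
  imports Defs "HOL-Real_Asymp.Real_Asymp"
begin

text \<open>
  On \<open>[0, 1]\<close> the Bernoulli polynomials have the Fourier expansion
  \<open>B_n(x) = - 2 n! / (2 pi)^n * (SUM m >= 1. cos (2 pi m x - n pi / 2) / m^n)\<close> for \<open>n >= 2\<close>,
  hence \<open>|B_n(x)| <= 2 n! zeta(n) / (2 pi)^n\<close>; the case \<open>n = 2\<close> is obtained from the Dirichlet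
  kernel. Differentiating the reflection formula \<open>Gamma(x) Gamma(1 - x) = pi / sin (pi x)\<close>
  expresses \<open>cot^(m)(pi r / k)\<close> by polygamma values at \<open>r / k\<close> and \<open>1 - r / k\<close>, so it is bounded
  by \<open>m! k^(m+1) / pi^(m+1)\<close> times the sums of \<open>n^-(m+1)\<close> over the residue classes of \<open>r\<close> and
  \<open>-r\<close> modulo \<open>k\<close>. Since \<open>d h mod k\<close> runs over the nonzero residues with \<open>d\<close>, the cotangent sum
  in \<open>v\<close> is at most \<open>2 (p-1)! (k^p - 1) zeta(p) / pi^p\<close> times the bound for \<open>B_(p+2)\<close>, and the
  term \<open>B_(p+2) B_p\<close> turns \<open>k^p - 1\<close> into \<open>k^p\<close>.
\<close>

declare bernoulli_num.simps [simp del]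

lemma bernoulli_num_recurrence:
  assumes "n \<ge> 1"
  shows "(\<Sum>j\<le>n. real (Suc n choose j) * bernoulli_num j) = 0"
proof -
  have "bernoulli_num n = - (\<Sum>j<n. real (Suc n choose j) * bernoulli_num j) / real (Suc n)"
    using assms by (subst bernoulli_num.simps) simp
  then show ?thesis
    by (simp add: lessThan_Suc_atMost[symmetric] field_simps)
qed

lemma bernoulli_poly_0 [simp]: "bernoulli_poly n 0 = bernoulli_num n"
proof -
  have "bernoulli_poly n 0 = (\<Sum>j\<le>n. if j = n then bernoulli_num n else 0)"
    unfolding bernoulli_poly_def by (intro sum.cong) auto
  then show ?thesis by simp
qed

lemma bernoulli_poly_1:
  assumes "n \<ge> 2"
  shows "bernoulli_poly n 1 = bernoulli_num n"
proof -
  obtain m where m: "n = Suc m" "m \<ge> 1" using assms by (cases n) auto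
  have "bernoulli_poly n 1 = (\<Sum>j\<le>m. real (n choose j) * bernoulli_num j) + bernoulli_num n"
    unfolding bernoulli_poly_def m(1) by simp
  then show ?thesis using bernoulli_num_recurrence[OF m(2)] m(1) by simp
qed

lemma bernoulli_poly_has_real_derivative:
  "(bernoulli_poly (Suc n) has_real_derivative real (Suc n) * bernoulli_poly n x) (at x)"
proof -
  define t where "t j = real (Suc n choose j) * bernoulli_num j * (real (Suc n - j) * x ^ (Suc n - j - 1))"
    for j
  have "(bernoulli_poly (Suc n) has_real_derivative (\<Sum>j\<le>Suc n. t j)) (at x)"
    unfolding bernoulli_poly_def[abs_def] t_def by (rule DERIV_sum) (auto intro!: derivative_eq_intros)
  moreover have "t j = real (Suc n) * (real (n choose j) * bernoulli_num j * x ^ (n - j))" for j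
  proof -
    have absorb: "real (Suc n - j) * real (Suc n choose j) = real (Suc n) * real (n choose j)"
      using binomial_absorb_comp[of "Suc n" j] by (metis diff_Suc_1 of_nat_mult)
    have "t j = (real (Suc n - j) * real (Suc n choose j)) * (bernoulli_num j * x ^ (n - j))"
      unfolding t_def by (simp add: ac_simps)
    then show ?thesis by (simp only: absorb)
  qed
  ultimately show ?thesis
    by (simp add: bernoulli_poly_def sum_distrib_left binomial_eq_0 del: of_nat_Suc)
qed

lemma bernoulli_num_small:
  "bernoulli_num 0 = 1" "bernoulli_num (Suc 0) = -1/2" "bernoulli_num (Suc (Suc 0)) = 1/6"
  by (simp_all add: bernoulli_num.simps)

lemma bernoulli_poly_2: "bernoulli_poly 2 x = x\<^sup>2 - x + 1/6"
  unfolding bernoulli_poly_def by (simp add: eval_nat_numeral bernoulli_num_small)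

section \<open>The Fourier series of the second Bernoulli polynomial\<close>

lemma Taylor_order_two_bound:
  fixes f f' f'' :: "real \<Rightarrow> real"
  assumes "a \<le> c" "c \<le> b" "a \<le> x" "x \<le> b"
    and f': "\<And>t. a \<le> t \<Longrightarrow> t \<le> b \<Longrightarrow> (f has_real_derivative f' t) (at t)"
    and f'': "\<And>t. a \<le> t \<Longrightarrow> t \<le> b \<Longrightarrow> (f' has_real_derivative f'' t) (at t)"
    and bound: "\<And>t. a \<le> t \<Longrightarrow> t \<le> b \<Longrightarrow> \<bar>f'' t\<bar> \<le> K"
  shows "\<bar>f x - f c - f' c * (x - c)\<bar> \<le> K / 2 * (x - c) ^ 2"
proof (cases "x = c")
  case False
  define diff where "diff m = (if m = 0 then f else if m = 1 then f' else f'')" for m :: nat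
  have "\<forall>m t. m < 2 \<and> a \<le> t \<and> t \<le> b \<longrightarrow> (diff m has_real_derivative diff (Suc m) t) (at t)"
    using f' f'' by (auto simp: diff_def less_2_cases_iff)
  then obtain t where t: "if x < c then x < t \<and> t < c else c < t \<and> t < x"
    and eq: "f x = (\<Sum>m<2. diff m c / fact m * (x - c) ^ m) + diff 2 t / fact 2 * (x - c) ^ 2"
    using Taylor[of 2 diff f a b c x] assms False by (auto simp: diff_def)
  have "f x - f c - f' c * (x - c) = f'' t / 2 * (x - c) ^ 2"
    using eq by (simp add: diff_def eval_nat_numeral)
  then have "\<bar>f x - f c - f' c * (x - c)\<bar> = \<bar>f'' t\<bar> / 2 * (x - c) ^ 2"
    by (simp only: abs_mult abs_divide) simp
  also have "\<dots> \<le> K / 2 * (x - c) ^ 2"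
    using t assms by (intro mult_right_mono divide_right_mono bound) (auto split: if_splits)
  finally show ?thesis .
qed simp

lemma sin_mult_sum_cos:
  "2 * sin (pi * t) * (\<Sum>m<M. cos (2 * pi * real (Suc m) * t))
     = sin (real (2 * M + 1) * pi * t) - sin (pi * t)"
proof (induction M)
  case (Suc M)
  have e1: "real (2 * Suc M + 1) * pi * t = 2 * pi * real (Suc M) * t + pi * t"
    and e2: "real (2 * M + 1) * pi * t = 2 * pi * real (Suc M) * t - pi * t"
    by (simp_all add: algebra_simps)
  have "2 * sin (pi * t) * (\<Sum>m<Suc M. cos (2 * pi * real (Suc m) * t))
      = sin (real (2 * M + 1) * pi * t) - sin (pi * t) + 2 * sin (pi * t) * cos (2 * pi * real (Suc M) * t)"
    using Suc by (simp add: algebra_simps)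
  also have "\<dots> = sin (real (2 * Suc M + 1) * pi * t) - sin (pi * t)"
    unfolding e1 e2 sin_add sin_diff by (simp add: algebra_simps)
  finally show ?case .
qed simp

definition cos_partial :: "nat \<Rightarrow> real \<Rightarrow> real" where
  "cos_partial M t = (\<Sum>m<M. cos (2 * pi * real (Suc m) * t) / real (Suc m) ^ 2)"

definition cos_partial' :: "nat \<Rightarrow> real \<Rightarrow> real" where
  "cos_partial' M t = (\<Sum>m<M. - (2 * pi * sin (2 * pi * real (Suc m) * t) / real (Suc m)))"

definition cos_partial'' :: "nat \<Rightarrow> real \<Rightarrow> real" where
  "cos_partial'' M t = (\<Sum>m<M. - (4 * pi ^ 2 * cos (2 * pi * real (Suc m) * t)))"

lemma cos_partial_has_real_derivative: "(cos_partial M has_real_derivative cos_partial' M t) (at t)"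
proof -
  have "((\<lambda>t. cos (2 * pi * r * t) / r ^ 2) has_real_derivative - (2 * pi * sin (2 * pi * r * t) / r)) (at t)"
    if "r \<noteq> 0" for r :: real
    using that by (auto intro!: derivative_eq_intros simp: power2_eq_square field_simps)
  then show ?thesis
    unfolding cos_partial_def[abs_def] cos_partial'_def by (intro DERIV_sum) simp
qed

lemma cos_partial'_has_real_derivative: "(cos_partial' M has_real_derivative cos_partial'' M t) (at t)"
proof -
  have "((\<lambda>t. - (2 * pi * sin (2 * pi * r * t) / r)) has_real_derivative - (4 * pi ^ 2 * cos (2 * pi * r * t))) (at t)"
    if "r \<noteq> 0" for r :: real
    using that by (auto intro!: derivative_eq_intros simp: power2_eq_square field_simps)
  then show ?thesis
    unfolding cos_partial'_def[abs_def] cos_partial''_def by (intro DERIV_sum) simp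
qed

lemma cos_partial''_eq:
  assumes "sin (pi * t) \<noteq> 0"
  shows "cos_partial'' M t = - 2 * pi ^ 2 * (sin (real (2 * M + 1) * pi * t) / sin (pi * t) - 1)"
proof -
  have "cos_partial'' M t = - 4 * pi ^ 2 * (\<Sum>m<M. cos (2 * pi * real (Suc m) * t))"
    unfolding cos_partial''_def by (simp add: sum_distrib_left)
  also have "(\<Sum>m<M. cos (2 * pi * real (Suc m) * t))
      = (sin (real (2 * M + 1) * pi * t) - sin (pi * t)) / (2 * sin (pi * t))"
    using sin_mult_sum_cos[of t M] assms by (simp add: field_simps)
  finally show ?thesis using assms by (simp add: field_simps)
qed

definition csc_pi :: "real \<Rightarrow> real" where
  "csc_pi t = 1 / sin (pi * t)"

definition csc_pi' :: "real \<Rightarrow> real" where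
  "csc_pi' t = - pi * cos (pi * t) / sin (pi * t) ^ 2"

definition csc_pi'' :: "real \<Rightarrow> real" where
  "csc_pi'' t = pi ^ 2 * (sin (pi * t) ^ 2 + 2 * cos (pi * t) ^ 2) / sin (pi * t) ^ 3"

lemma csc_pi_has_real_derivative:
  "sin (pi * t) \<noteq> 0 \<Longrightarrow> (csc_pi has_real_derivative csc_pi' t) (at t)"
  unfolding csc_pi_def[abs_def] csc_pi'_def
  by (auto intro!: derivative_eq_intros simp: power2_eq_square field_simps)

lemma csc_pi'_has_real_derivative:
  "sin (pi * t) \<noteq> 0 \<Longrightarrow> (csc_pi' has_real_derivative csc_pi'' t) (at t)"
  unfolding csc_pi'_def[abs_def] csc_pi''_def
  by (auto intro!: derivative_eq_intros simp: power2_eq_square power3_eq_cube field_simps)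

lemma abs_csc_pi'_le:
  assumes "0 < s" "s \<le> sin (pi * t)"
  shows "\<bar>csc_pi' t\<bar> \<le> pi / s ^ 2"
proof -
  have "\<bar>csc_pi' t\<bar> \<le> pi / sin (pi * t) ^ 2"
    unfolding csc_pi'_def using assms by (simp add: abs_mult divide_right_mono mult_left_le)
  also have "\<dots> \<le> pi / s ^ 2"
    using assms by (intro divide_left_mono power_mono) auto
  finally show ?thesis .
qed

lemma abs_csc_pi''_le:
  assumes "0 < s" "s \<le> sin (pi * t)"
  shows "\<bar>csc_pi'' t\<bar> \<le> 3 * pi ^ 2 / s ^ 3"
proof -
  have "sin (pi * t) ^ 2 + 2 * cos (pi * t) ^ 2 \<le> 3"
    using sin_cos_squared_add[of "pi * t"] zero_le_power2[of "sin (pi * t)"] by linarith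
  then have "\<bar>csc_pi'' t\<bar> \<le> 3 * pi ^ 2 / sin (pi * t) ^ 3"
    unfolding csc_pi''_def using assms by (simp add: divide_right_mono)
  also have "\<dots> \<le> 3 * pi ^ 2 / s ^ 3"
    using assms by (intro divide_left_mono power_mono) auto
  finally show ?thesis .
qed

lemma sin_pi_mono_towards_half:
  assumes "0 < x" "x < 1" "min x (1/2) \<le> t" "t \<le> max x (1/2)"
  shows "sin (pi * x) \<le> sin (pi * t)"
proof (cases "x \<le> 1/2")
  case True
  then have "0 \<le> pi * x" "pi * x \<le> pi * t" "pi * t \<le> pi / 2"
    using assms by auto
  then show ?thesis by (intro sin_monotone_2pi_le) linarith+
next
  case False
  then have "0 \<le> pi - pi * x" "pi - pi * x \<le> pi - pi * t" "pi - pi * t \<le> pi / 2"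
    using assms by (auto simp: algebra_simps)
  then have "sin (pi - pi * x) \<le> sin (pi - pi * t)"
    by (intro sin_monotone_2pi_le) linarith+
  then show ?thesis by simp
qed


lemma sin_mult_csc_pi_has_real_derivative:
  assumes "sin (pi * t) \<noteq> 0"
  shows "((\<lambda>t. sin (L * t) * csc_pi t) has_real_derivative
           L * cos (L * t) * csc_pi t + sin (L * t) * csc_pi' t) (at t)"
    and "((\<lambda>t. L * cos (L * t) * csc_pi t + sin (L * t) * csc_pi' t) has_real_derivative
           - (L ^ 2) * sin (L * t) * csc_pi t + 2 * L * cos (L * t) * csc_pi' t + sin (L * t) * csc_pi'' t) (at t)"
  using csc_pi_has_real_derivative[OF assms] csc_pi'_has_real_derivative[OF assms]
  by (auto intro!: derivative_eq_intros simp: algebra_simps power2_eq_square)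

definition dirichlet_freq :: "nat \<Rightarrow> real" where
  "dirichlet_freq M = real (2 * M + 1) * pi"

text \<open>The weight \<open>2 pi\<^sup>2 / L\<^sup>2\<close> of the correction term makes its second derivative cancel the
  Dirichlet kernel \<open>sin (L t) / sin (pi t)\<close> in \<open>cos_partial''\<close>, so that the second
  derivative of the error is \<open>O(1 / L)\<close> away from the integers.\<close>

definition cos_partial_err :: "nat \<Rightarrow> real \<Rightarrow> real" where
  "cos_partial_err M t = cos_partial M t - pi ^ 2 * bernoulli_poly 2 t
     - 2 * pi ^ 2 / dirichlet_freq M ^ 2 * (sin (dirichlet_freq M * t) * csc_pi t)"

definition cos_partial_err' :: "nat \<Rightarrow> real \<Rightarrow> real" where
  "cos_partial_err' M t = cos_partial' M t - pi ^ 2 * (2 * t - 1)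
     - 2 * pi ^ 2 / dirichlet_freq M ^ 2
       * (dirichlet_freq M * cos (dirichlet_freq M * t) * csc_pi t + sin (dirichlet_freq M * t) * csc_pi' t)"

definition cos_partial_err'' :: "nat \<Rightarrow> real \<Rightarrow> real" where
  "cos_partial_err'' M t = - (2 * pi ^ 2 / dirichlet_freq M ^ 2)
     * (2 * dirichlet_freq M * cos (dirichlet_freq M * t) * csc_pi' t
        + sin (dirichlet_freq M * t) * csc_pi'' t)"

lemma cos_partial_err_has_real_derivative:
  assumes "sin (pi * t) \<noteq> 0"
  shows "(cos_partial_err M has_real_derivative cos_partial_err' M t) (at t)"
proof -
  have "bernoulli_poly 2 = (\<lambda>x. x ^ 2 - x + 1/6)"
    by (rule ext) (rule bernoulli_poly_2)
  then have "(bernoulli_poly 2 has_real_derivative 2 * t - 1) (at t)"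
    by (auto intro!: derivative_eq_intros)
  then show ?thesis
    unfolding cos_partial_err_def[abs_def] cos_partial_err'_def
    by (intro DERIV_diff DERIV_cmult cos_partial_has_real_derivative
        sin_mult_csc_pi_has_real_derivative(1) assms)
qed

lemma cos_partial_err'_has_real_derivative:
  assumes "sin (pi * t) \<noteq> 0"
  shows "(cos_partial_err' M has_real_derivative cos_partial_err'' M t) (at t)"
proof -
  define L where "L = dirichlet_freq M"
  have "L > 0" by (simp add: L_def dirichlet_freq_def)
  have "sin (L * t) * csc_pi t = sin (real (2 * M + 1) * pi * t) / sin (pi * t)"
    unfolding csc_pi_def L_def dirichlet_freq_def by (simp add: mult.assoc)
  then have kernel: "cos_partial'' M t = - 2 * pi ^ 2 * (sin (L * t) * csc_pi t - 1)"
    using cos_partial''_eq[OF assms, of M] by simp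
  have "((\<lambda>t. pi ^ 2 * (2 * t - 1)) has_real_derivative 2 * pi ^ 2) (at t)"
    by (auto intro!: derivative_eq_intros)
  then have "(cos_partial_err' M has_real_derivative cos_partial'' M t - 2 * pi ^ 2
      - 2 * pi ^ 2 / L ^ 2 * (- (L ^ 2) * sin (L * t) * csc_pi t + 2 * L * cos (L * t) * csc_pi' t
                              + sin (L * t) * csc_pi'' t)) (at t)"
    unfolding cos_partial_err'_def[abs_def] L_def
    by (intro DERIV_diff DERIV_cmult cos_partial'_has_real_derivative
        sin_mult_csc_pi_has_real_derivative(2) assms)
  moreover have "cos_partial'' M t - 2 * pi ^ 2
      - 2 * pi ^ 2 / L ^ 2 * (- (L ^ 2) * sin (L * t) * csc_pi t + 2 * L * cos (L * t) * csc_pi' t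
                              + sin (L * t) * csc_pi'' t) = cos_partial_err'' M t"
    unfolding kernel cos_partial_err''_def L_def[symmetric] using \<open>L > 0\<close> by (simp add: field_simps)
  ultimately show ?thesis by simp
qed

lemma abs_cos_partial_err''_le:
  fixes M :: nat
  assumes "0 < s" "s \<le> sin (pi * t)"
  defines "L \<equiv> dirichlet_freq M"
  shows "\<bar>cos_partial_err'' M t\<bar> \<le> 2 * pi ^ 2 / L ^ 2 * (2 * L * (pi / s ^ 2) + 3 * pi ^ 2 / s ^ 3)"
proof -
  have "L > 0" by (simp add: L_def dirichlet_freq_def)
  have "\<bar>2 * L * cos (L * t) * csc_pi' t\<bar> \<le> 2 * L * 1 * (pi / s ^ 2)"
    unfolding abs_mult using \<open>L > 0\<close> abs_csc_pi'_le[OF assms(1,2)] by (intro mult_mono) auto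
  moreover have "\<bar>sin (L * t) * csc_pi'' t\<bar> \<le> 1 * (3 * pi ^ 2 / s ^ 3)"
    unfolding abs_mult using abs_csc_pi''_le[OF assms(1,2)] by (intro mult_mono) auto
  ultimately have "\<bar>2 * L * cos (L * t) * csc_pi' t + sin (L * t) * csc_pi'' t\<bar>
      \<le> 2 * L * (pi / s ^ 2) + 3 * pi ^ 2 / s ^ 3"
    by linarith
  from mult_left_mono[OF this, of "2 * pi ^ 2 / L ^ 2"] show ?thesis
    by (simp add: cos_partial_err''_def L_def abs_mult)
qed

lemma cos_partial_err_half:
  fixes M :: nat
  defines "L \<equiv> dirichlet_freq M"
  shows "cos_partial_err M (1/2) = cos_partial M (1/2) + pi ^ 2 / 12 - 2 * pi ^ 2 / L ^ 2 * sin (L / 2)"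
    and "cos_partial_err' M (1/2) = - (2 * pi ^ 2 / L ^ 2 * L * cos (L / 2))"
proof -
  have "sin (2 * pi * real (Suc m) * (1/2)) = 0" for m
    using sin_npi[of "Suc m"] by (simp add: mult.commute)
  then have "cos_partial' M (1/2) = 0"
    by (simp add: cos_partial'_def)
  moreover have "csc_pi (1/2) = 1" "csc_pi' (1/2) = 0"
    by (simp_all add: csc_pi_def csc_pi'_def)
  ultimately show "cos_partial_err M (1/2) = cos_partial M (1/2) + pi ^ 2 / 12 - 2 * pi ^ 2 / L ^ 2 * sin (L / 2)"
    and "cos_partial_err' M (1/2) = - (2 * pi ^ 2 / L ^ 2 * L * cos (L / 2))"
    by (simp_all add: cos_partial_err_def cos_partial_err'_def L_def bernoulli_poly_2 power2_eq_square)
qed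

text \<open>The error is expanded around \<open>1/2\<close>, where it and its derivative are explicit, rather than
  near \<open>0\<close>, where \<open>csc (pi t)\<close> blows up.\<close>

lemma cos_partial_err_Taylor:
  fixes M :: nat
  assumes x: "0 < x" "x < 1"
  defines "s \<equiv> sin (pi * x)" and "L \<equiv> dirichlet_freq M"
  shows "\<bar>cos_partial_err M x - cos_partial_err M (1/2) - cos_partial_err' M (1/2) * (x - 1/2)\<bar>
           \<le> 2 * pi ^ 2 / L ^ 2 * (2 * L * (pi / s ^ 2) + 3 * pi ^ 2 / s ^ 3) / 2 * (x - 1/2) ^ 2"
proof -
  define a where "a = min x (1/2)"
  define b where "b = max x (1/2)"
  have s_le: "s \<le> sin (pi * t)" if "a \<le> t" "t \<le> b" for t
    using sin_pi_mono_towards_half[OF x] that by (simp add: a_def b_def s_def)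
  moreover have "s > 0"
    using x by (auto simp: s_def intro!: sin_gt_zero)
  ultimately have "sin (pi * t) \<noteq> 0" if "a \<le> t" "t \<le> b" for t
    using that by force
  moreover have "a \<le> 1/2" "1/2 \<le> b" "a \<le> x" "x \<le> b"
    by (auto simp: a_def b_def)
  ultimately show ?thesis
    using s_le abs_cos_partial_err''_le[OF \<open>s > 0\<close>, of _ M]
    by (intro Taylor_order_two_bound[of a "1/2" b x _ "cos_partial_err' M" "cos_partial_err'' M"]
        cos_partial_err_has_real_derivative cos_partial_err'_has_real_derivative)
      (auto simp: L_def)
qed

lemma cos_partial_approx:
  fixes M :: nat
  assumes x: "0 < x" "x < 1"
  defines "s \<equiv> sin (pi * x)" and "L \<equiv> dirichlet_freq M"
  shows "\<bar>cos_partial M x - pi ^ 2 * bernoulli_poly 2 x\<bar>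
           \<le> (2 * pi ^ 2 + 2 * pi ^ 3 / s ^ 2) / L + (2 * pi ^ 2 + 2 * pi ^ 2 / s + 3 * pi ^ 4 / s ^ 3) / L ^ 2
              + \<bar>cos_partial M (1/2) + pi ^ 2 / 12\<bar>"
proof -
  define \<kappa> where "\<kappa> = 2 * pi ^ 2 / L ^ 2"
  define K where "K = \<kappa> * (2 * L * (pi / s ^ 2) + 3 * pi ^ 2 / s ^ 3)"
  have L: "L > 0" and s: "s > 0" and \<kappa>: "\<kappa> > 0"
    using x by (auto simp: L_def dirichlet_freq_def s_def \<kappa>_def intro!: sin_gt_zero)
  have "\<bar>\<kappa> * sin (L / 2)\<bar> \<le> \<kappa>" "\<bar>\<kappa> * L * cos (L / 2)\<bar> \<le> \<kappa> * L"
    using \<kappa> L by (simp_all add: abs_mult mult_left_le)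
  then have half: "\<bar>cos_partial_err M (1/2)\<bar> \<le> \<bar>cos_partial M (1/2) + pi ^ 2 / 12\<bar> + \<kappa>"
    "\<bar>cos_partial_err' M (1/2)\<bar> \<le> \<kappa> * L"
    unfolding cos_partial_err_half[of M, folded L_def, folded \<kappa>_def] by linarith+
  have "\<bar>x - 1/2\<bar> \<le> 1"
    using x by linarith
  then have "\<bar>cos_partial_err' M (1/2) * (x - 1/2)\<bar> \<le> \<kappa> * L"
    using half(2) mult_mono[OF half(2) \<open>\<bar>x - 1/2\<bar> \<le> 1\<close>] \<kappa> L by (simp add: abs_mult)
  moreover have "K / 2 * (x - 1/2) ^ 2 \<le> K / 2"
    using \<open>\<bar>x - 1/2\<bar> \<le> 1\<close> \<kappa> L s
    by (intro mult_left_le) (auto simp: K_def abs_square_le_1)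
  moreover have "\<bar>\<kappa> * (sin (L * x) * csc_pi x)\<bar> \<le> \<kappa> / s"
    using \<kappa> s by (simp add: csc_pi_def s_def[symmetric] abs_mult divide_right_mono mult_left_le)
  ultimately have "\<bar>cos_partial M x - pi ^ 2 * bernoulli_poly 2 x\<bar>
      \<le> \<bar>cos_partial M (1/2) + pi ^ 2 / 12\<bar> + (\<kappa> + \<kappa> * L + K / 2 + \<kappa> / s)"
    using cos_partial_err_Taylor[OF x, of M, folded s_def L_def, folded \<kappa>_def] half(1)
    unfolding cos_partial_err_def L_def[symmetric] \<kappa>_def[symmetric] K_def by linarith
  also have "\<kappa> + \<kappa> * L + K / 2 + \<kappa> / s
      = (2 * pi ^ 2 + 2 * pi ^ 3 / s ^ 2) / L + (2 * pi ^ 2 + 2 * pi ^ 2 / s + 3 * pi ^ 4 / s ^ 3) / L ^ 2"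
    using L s by (simp add: \<kappa>_def K_def field_simps power2_eq_square power3_eq_cube eval_nat_numeral)
  finally show ?thesis
    by (simp add: add.commute)
qed

lemma inverse_squares_sums_Suc: "(\<lambda>n. 1 / real (Suc n) ^ 2) sums (pi ^ 2 / 6)"
  using inverse_squares_sums by (simp add: of_nat_power)

lemma alternating_inverse_squares_sums:
  "(\<lambda>n. (-1) ^ Suc n / real (Suc n) ^ 2) sums (- (pi ^ 2 / 12))"
proof -
  define a where "a n = 1 / real (Suc n) ^ 2" for n
  define e where "e n = (if odd n then a n else 0)" for n
  have "(\<lambda>j. a j / 4) sums (pi ^ 2 / 24)"
    using sums_divide[OF inverse_squares_sums_Suc, of 4] by (simp add: a_def)
  moreover have "(\<lambda>j. e (2 * j + 1)) = (\<lambda>j. a j / 4)"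
    by (auto simp: e_def a_def field_simps power2_eq_square)
  ultimately have "(\<lambda>j. e (2 * j + 1)) sums (pi ^ 2 / 24)"
    by (simp only:)
  moreover have "strict_mono (\<lambda>j::nat. 2 * j + 1)"
    by (auto simp: strict_mono_def)
  moreover have "e n = 0" if "n \<notin> range (\<lambda>j::nat. 2 * j + 1)" for n
    using that oddE[of n] by (auto simp: e_def)
  ultimately have "e sums (pi ^ 2 / 24)"
    using sums_mono_reindex[of "\<lambda>j::nat. 2 * j + 1" e] by simp
  then have "(\<lambda>n. 2 * e n - a n) sums (2 * (pi ^ 2 / 24) - pi ^ 2 / 6)"
    unfolding a_def by (intro sums_diff sums_mult inverse_squares_sums_Suc)
  moreover have "2 * e n - a n = (-1) ^ Suc n / real (Suc n) ^ 2" for n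
    by (cases "odd n") (auto simp: e_def a_def)
  ultimately show ?thesis by simp
qed

lemma cos_partial_half_tendsto: "(\<lambda>M. cos_partial M (1/2)) \<longlonglongrightarrow> - (pi ^ 2 / 12)"
proof -
  have "cos (2 * pi * real (Suc m) * (1/2)) = (-1) ^ Suc m" for m
    using cos_npi[of "Suc m"] by (simp add: mult.commute)
  then show ?thesis
    using alternating_inverse_squares_sums by (simp add: cos_partial_def sums_def)
qed

lemma cos_series_bernoulli_poly_2:
  assumes "0 \<le> x" "x \<le> 1"
  shows "(\<lambda>m. cos (2 * pi * real (Suc m) * x) / real (Suc m) ^ 2) sums (pi ^ 2 * bernoulli_poly 2 x)"
proof -
  consider "x = 0" | "x = 1" | "0 < x" "x < 1"
    using assms by linarith
  then show ?thesis
  proof cases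
    case 1
    then show ?thesis using inverse_squares_sums_Suc by (simp add: bernoulli_poly_2 del: bernoulli_poly_0)
  next
    case 2
    have "cos (2 * pi * real (Suc m)) = 1" for m
      using cos_npi[of "2 * Suc m"] by (simp add: mult.commute mult.left_commute)
    then show ?thesis using 2 inverse_squares_sums_Suc by (simp add: bernoulli_poly_2)
  next
    case 3
    define s where "s = sin (pi * x)"
    define c1 where "c1 = 2 * pi ^ 2 + 2 * pi ^ 3 / s ^ 2"
    define c2 where "c2 = 2 * pi ^ 2 + 2 * pi ^ 2 / s + 3 * pi ^ 4 / s ^ 3"
    define g where "g M = c1 / (real (2 * M + 1) * pi) + c2 / (real (2 * M + 1) * pi) ^ 2
      + \<bar>cos_partial M (1/2) + pi ^ 2 / 12\<bar>" for M
    have "(\<lambda>M. c1 / (real (2 * M + 1) * pi) + c2 / (real (2 * M + 1) * pi) ^ 2) \<longlonglongrightarrow> 0"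
      by real_asymp
    moreover have "(\<lambda>M. \<bar>cos_partial M (1/2) + pi ^ 2 / 12\<bar>) \<longlonglongrightarrow> 0"
      using tendsto_add[OF cos_partial_half_tendsto tendsto_const[of "pi ^ 2 / 12"]]
      by (intro tendsto_rabs_zero) simp
    ultimately have g: "g \<longlonglongrightarrow> 0"
      unfolding g_def using tendsto_add by fastforce
    have bound: "\<forall>M. norm (cos_partial M x - pi ^ 2 * bernoulli_poly 2 x) \<le> g M"
      using cos_partial_approx[OF 3] by (simp add: g_def s_def c1_def c2_def dirichlet_freq_def)
    have "(\<lambda>M. cos_partial M x - pi ^ 2 * bernoulli_poly 2 x) \<longlonglongrightarrow> 0"
      by (rule Lim_null_comparison[OF always_eventually[OF bound] g])
    then show ?thesis
      by (simp add: sums_def cos_partial_def LIM_zero_iff)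
  qed
qed

section \<open>Fourier series of the Bernoulli polynomials\<close>

lemma summable_inverse_power_Suc: "n \<ge> 2 \<Longrightarrow> summable (\<lambda>m. 1 / real (Suc m) ^ n)"
  using inverse_power_summable[of n, where 'a=real] summable_Suc_iff[of "\<lambda>m. inverse (real m ^ n)"]
  by (simp add: inverse_eq_divide)

lemma zeta_nat_sums: "n \<ge> 2 \<Longrightarrow> (\<lambda>m. 1 / real (Suc m) ^ n) sums zeta_nat n"
  unfolding zeta_nat_def using summable_inverse_power_Suc by (simp add: summable_sums)

lemma zeta_nat_nonneg: "n \<ge> 2 \<Longrightarrow> zeta_nat n \<ge> 0"
  unfolding zeta_nat_def by (intro suminf_nonneg summable_inverse_power_Suc) auto

definition bernoulli_series :: "nat \<Rightarrow> real \<Rightarrow> real" where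
  "bernoulli_series n x = (\<Sum>m. cos (2 * pi * real (Suc m) * x - real n * pi / 2) / real (Suc m) ^ n)"

definition bernoulli_fourier :: "nat \<Rightarrow> real \<Rightarrow> real" where
  "bernoulli_fourier n x = - (2 * fact n / (2 * pi) ^ n) * bernoulli_series n x"

lemma abs_bernoulli_series_term_le:
  "\<bar>cos (2 * pi * real (Suc m) * x - real n * pi / 2) / real (Suc m) ^ n\<bar> \<le> 1 / real (Suc m) ^ n"
  by (auto simp: abs_divide intro!: divide_right_mono)

lemma summable_bernoulli_series:
  "n \<ge> 2 \<Longrightarrow> summable (\<lambda>m. cos (2 * pi * real (Suc m) * x - real n * pi / 2) / real (Suc m) ^ n)"
  by (rule summable_comparison_test[OF _ summable_inverse_power_Suc])
    (use abs_bernoulli_series_term_le in auto)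

lemma abs_bernoulli_series_le:
  assumes "n \<ge> 2"
  shows "\<bar>bernoulli_series n x\<bar> \<le> zeta_nat n"
proof -
  have "summable (\<lambda>m. \<bar>cos (2 * pi * real (Suc m) * x - real n * pi / 2) / real (Suc m) ^ n\<bar>)"
    by (rule summable_comparison_test'[OF summable_inverse_power_Suc[OF assms]])
      (use abs_bernoulli_series_term_le in auto)
  then show ?thesis
    unfolding bernoulli_series_def zeta_nat_def
    by (intro order_trans[OF summable_rabs] suminf_le summable_inverse_power_Suc assms
        abs_bernoulli_series_term_le)
qed

lemma abs_bernoulli_fourier_le:
  "n \<ge> 2 \<Longrightarrow> \<bar>bernoulli_fourier n x\<bar> \<le> 2 * fact n / (2 * pi) ^ n * zeta_nat n"
  unfolding bernoulli_fourier_def using abs_bernoulli_series_le[of n x]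
  by (auto simp: abs_mult intro!: mult_left_mono divide_right_mono)

lemma bernoulli_series_term_has_real_derivative:
  assumes "n \<ge> 1"
  shows "((\<lambda>t. cos (2 * pi * real (Suc m) * t - real n * pi / 2) / real (Suc m) ^ n) has_real_derivative
           2 * pi * (cos (2 * pi * real (Suc m) * t - real (n - 1) * pi / 2) / real (Suc m) ^ (n - 1))) (at t)"
proof -
  have "2 * pi * real (Suc m) * t - real (n - 1) * pi / 2
      = (2 * pi * real (Suc m) * t - real n * pi / 2) + pi / 2"
    using assms by (simp add: of_nat_diff field_simps)
  then have cos_shift: "cos (2 * pi * real (Suc m) * t - real (n - 1) * pi / 2)
      = - sin (2 * pi * real (Suc m) * t - real n * pi / 2)"
    by (simp only:) (simp add: cos_add)
  have power_eq: "real (Suc m) ^ n = real (Suc m) * real (Suc m) ^ (n - 1)"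
    using assms by (simp flip: power_Suc)
  have frac: "- S * (2 * pi * r) / (r * R) = 2 * pi * (- S / R)" if "r \<noteq> 0" for r R S :: real
    using that by (simp add: field_simps)
  have "((\<lambda>t. cos (2 * pi * real (Suc m) * t - real n * pi / 2) / real (Suc m) ^ n) has_real_derivative
      - sin (2 * pi * real (Suc m) * t - real n * pi / 2) * (2 * pi * real (Suc m)) / real (Suc m) ^ n) (at t)"
    by (auto intro!: derivative_eq_intros)
  then show ?thesis
    unfolding cos_shift power_eq frac[OF of_nat_neq_0] .
qed

text \<open>Termwise differentiation is legitimate because the differentiated series is dominated by
  the convergent series of \<open>1 / m ^ (n - 1)\<close>, which needs \<open>n \<ge> 3\<close>.\<close>

lemma bernoulli_series_has_real_derivative:
  assumes "n \<ge> 3"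
  shows "(bernoulli_series n has_real_derivative 2 * pi * bernoulli_series (n - 1) x) (at x)"
proof -
  define f' where "f' m t = 2 * pi * (cos (2 * pi * real (Suc m) * t - real (n - 1) * pi / 2)
      / real (Suc m) ^ (n - 1))" for m t
  have uniform: "uniformly_convergent_on UNIV (\<lambda>N t. \<Sum>i<N. f' i t)"
  proof (rule Weierstrass_m_test')
    show "norm (f' m t) \<le> 2 * pi * (1 / real (Suc m) ^ (n - 1))" for m t
      using mult_left_mono[OF abs_bernoulli_series_term_le[of m t "n - 1"], of "2 * pi"]
      by (simp add: f'_def abs_mult)
    show "summable (\<lambda>m. 2 * pi * (1 / real (Suc m) ^ (n - 1)))"
      using assms by (intro summable_mult summable_inverse_power_Suc) auto
  qed
  define f where "f m t = cos (2 * pi * real (Suc m) * t - real n * pi / 2) / real (Suc m) ^ n"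
    for m t
  have termwise: "(f m has_real_derivative f' m t) (at t within UNIV)" for m t
    unfolding f_def[abs_def] f'_def using assms by (intro bernoulli_series_term_has_real_derivative) auto
  have "summable (\<lambda>m. f m 0)"
    unfolding f_def using assms by (intro summable_bernoulli_series) auto
  from has_field_derivative_series'(2)[OF convex_UNIV termwise uniform UNIV_I this]
  have "((\<lambda>t. \<Sum>m. f m t) has_real_derivative (\<Sum>m. f' m x)) (at x)"
    by simp
  moreover have "(\<Sum>m. f' m x) = 2 * pi * bernoulli_series (n - 1) x"
    unfolding f'_def bernoulli_series_def using assms by (intro suminf_mult summable_bernoulli_series) auto
  ultimately show ?thesis
    by (simp add: f_def bernoulli_series_def[abs_def])
qed

lemma bernoulli_fourier_has_real_derivative:
  assumes "n \<ge> 3"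
  shows "(bernoulli_fourier n has_real_derivative real n * bernoulli_fourier (n - 1) x) (at x)"
proof -
  obtain k where k: "n = Suc k" using assms by (cases n) auto
  have "- (2 * fact n / (2 * pi) ^ n) * (2 * pi * bernoulli_series (n - 1) x)
      = real n * bernoulli_fourier (n - 1) x"
    unfolding bernoulli_fourier_def k by (simp add: field_simps)
  with bernoulli_series_has_real_derivative[OF assms] show ?thesis
    unfolding bernoulli_fourier_def[abs_def] by (metis DERIV_cmult)
qed

lemma bernoulli_series_1: "bernoulli_series n 1 = bernoulli_series n 0"
proof -
  have "sin (2 * pi * (1 + real m)) = 0" "cos (2 * pi * (1 + real m)) = 1" for m
    using sin_npi[of "2 * Suc m"] cos_npi[of "2 * Suc m"] by (simp_all add: mult_ac)
  then show ?thesis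
    unfolding bernoulli_series_def by (simp add: cos_diff)
qed

lemma bernoulli_poly_2_eq_fourier:
  assumes "0 \<le> x" "x \<le> 1"
  shows "bernoulli_poly 2 x = bernoulli_fourier 2 x"
proof -
  have "cos (2 * pi * real (Suc m) * x - real (2::nat) * pi / 2) = - cos (2 * pi * real (Suc m) * x)" for m
    by (simp add: cos_diff)
  then have "bernoulli_series 2 x = - (pi ^ 2 * bernoulli_poly 2 x)"
    using sums_minus[OF cos_series_bernoulli_poly_2[OF assms]]
    by (simp add: bernoulli_series_def sums_iff)
  then show ?thesis
    by (simp add: bernoulli_fourier_def power2_eq_square)
qed

text \<open>Both sides satisfy \<open>F' = n F\<close> and \<open>F(0) = F(1)\<close>; two applications of the mean value
  theorem transfer the identity from \<open>n\<close> to \<open>n + 1\<close>.\<close>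

lemma bernoulli_poly_eq_fourier:
  assumes "n \<ge> 2" "0 \<le> x" "x \<le> 1"
  shows "bernoulli_poly n x = bernoulli_fourier n x"
  using assms
proof (induction n arbitrary: x rule: dec_induct)
  case base
  then show ?case by (rule bernoulli_poly_2_eq_fourier)
next
  case (step n)
  define D where "D t = bernoulli_fourier (Suc n) t - bernoulli_poly (Suc n) t" for t
  define G where "G t = bernoulli_fourier (Suc (Suc n)) t - bernoulli_poly (Suc (Suc n)) t" for t
  have dD: "(D has_real_derivative real (Suc n) * (bernoulli_fourier n t - bernoulli_poly n t)) (at t)" for t
    unfolding D_def[abs_def]
    using step.hyps bernoulli_fourier_has_real_derivative[of "Suc n" t] bernoulli_poly_has_real_derivative[of n t]
    by (auto intro!: derivative_eq_intros simp: algebra_simps)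
  have dG: "(G has_real_derivative real (Suc (Suc n)) * D t) (at t)" for t
    unfolding G_def[abs_def] D_def
    using step.hyps bernoulli_fourier_has_real_derivative[of "Suc (Suc n)" t]
      bernoulli_poly_has_real_derivative[of "Suc n" t]
    by (auto intro!: derivative_eq_intros simp: algebra_simps)
  have D_const: "D t = D 0" if "0 \<le> t" "t \<le> 1" for t
  proof (cases "t = 0")
    case False
    with that have "0 < t" by simp
    from MVT2[OF this, of D "\<lambda>t. real (Suc n) * (bernoulli_fourier n t - bernoulli_poly n t)"] dD
    obtain z where z: "0 < z" "z < t"
        "D t - D 0 = (t - 0) * (real (Suc n) * (bernoulli_fourier n z - bernoulli_poly n z))"
      by blast
    then show ?thesis using that step.IH[of z] by simp
  qed simp
  have "G 1 = G 0"
    using bernoulli_series_1 bernoulli_poly_1[of "Suc (Suc n)"] step.hyps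
    by (simp add: G_def bernoulli_fourier_def)
  then obtain z where "0 < z" "z < 1" "D z = 0"
    using MVT2[of 0 1 G] dG by force
  with D_const[of z] D_const[of x] step.prems show ?case
    by (simp add: D_def)
qed

lemma abs_bernoulli_poly_le:
  assumes "n \<ge> 2" "0 \<le> x" "x \<le> 1"
  shows "\<bar>bernoulli_poly n x\<bar> \<le> 2 * fact n / (2 * pi) ^ n * zeta_nat n"
  using bernoulli_poly_eq_fourier[OF assms] abs_bernoulli_fourier_le[OF assms(1)] by simp

section \<open>Derivatives of the cotangent\<close>

lemma deriv_periodic:
  fixes f :: "real \<Rightarrow> real"
  assumes "\<And>y. f (y + c) = f y"
  shows "deriv f (y + c) = deriv f y"
proof -
  have "(\<lambda>x. f (x + c)) = f" using assms by auto
  then have "(f has_field_derivative D) (at (y + c)) \<longleftrightarrow> (f has_field_derivative D) (at y)" for D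
    using DERIV_shift[of f D y c] by simp
  then show ?thesis unfolding deriv_def by simp
qed

lemma iter_deriv_periodic:
  fixes f :: "real \<Rightarrow> real"
  assumes "\<And>y. f (y + c) = f y"
  shows "(deriv ^^ m) f (y + c) = (deriv ^^ m) f y"
  by (induction m arbitrary: y) (simp_all add: assms deriv_periodic)

lemma iter_deriv_cot_add_pi_multiple: "(deriv ^^ m) cot (y + real q * pi) = (deriv ^^ m) cot y"
proof (induction q)
  case (Suc q)
  have "cot (y + pi) = cot y" for y :: real
    by (simp add: cot_def sin_add cos_add)
  then have "(deriv ^^ m) cot ((y + real q * pi) + pi) = (deriv ^^ m) cot (y + real q * pi)"
    by (rule iter_deriv_periodic)
  with Suc show ?case by (simp add: algebra_simps)
qed simp

lemma pos_notin_nonpos_Ints: "(x::real) > 0 \<Longrightarrow> x \<notin> \<int>\<^sub>\<le>\<^sub>0"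
  by (auto elim!: nonpos_Ints_cases)

lemma Gamma_reflection_real: "Gamma x * Gamma (1 - x) = pi / sin (pi * x)" for x :: real
proof -
  have "complex_of_real (Gamma x * Gamma (1 - x)) = complex_of_real (pi / sin (pi * x))"
    using Gamma_reflection_complex[of "complex_of_real x"]
    by (simp add: Gamma_complex_of_real[symmetric] sin_of_real[symmetric])
  then show ?thesis by (simp only: of_real_eq_iff)
qed

lemma pi_cot_eq_Digamma:
  fixes x :: real
  assumes "0 < x" "x < 1"
  shows "pi * cot (pi * x) = Digamma (1 - x) - Digamma x"
proof -
  have s: "sin (pi * x) > 0" using assms by (intro sin_gt_zero) auto
  have x: "x \<notin> \<int>\<^sub>\<le>\<^sub>0" "1 - x \<notin> \<int>\<^sub>\<le>\<^sub>0"
    using assms by (auto intro!: pos_notin_nonpos_Ints)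
  have "((\<lambda>t. Gamma t * Gamma (1 - t)) has_field_derivative
      Gamma x * Gamma (1 - x) * (Digamma x - Digamma (1 - x))) (at x)"
    using x by (auto intro!: derivative_eq_intros has_field_derivative_Gamma simp: algebra_simps)
  moreover have "((\<lambda>t. pi / sin (pi * t)) has_field_derivative - pi * cos (pi * x) * pi / sin (pi * x) ^ 2) (at x)"
    using s by (auto intro!: derivative_eq_intros simp: power2_eq_square)
  ultimately have "Gamma x * Gamma (1 - x) * (Digamma x - Digamma (1 - x))
      = - pi * cos (pi * x) * pi / sin (pi * x) ^ 2"
    unfolding Gamma_reflection_real by (rule DERIV_unique)
  then have "pi / sin (pi * x) * (Digamma x - Digamma (1 - x)) = pi / sin (pi * x) * (- pi * cot (pi * x))"
    using s by (simp add: Gamma_reflection_real cot_def power2_eq_square field_simps)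
  then have "Digamma x - Digamma (1 - x) = - pi * cot (pi * x)"
    using s by (subst (asm) mult_left_cancel) auto
  then show ?thesis by simp
qed

definition cot_polygamma :: "nat \<Rightarrow> real \<Rightarrow> real" where
  "cot_polygamma m y = 1 / pi ^ (m + 1) * ((-1) ^ m * Polygamma m (1 - y / pi) - Polygamma m (y / pi))"

lemma cot_polygamma_has_field_derivative:
  assumes "0 < y" "y < pi"
  shows "(cot_polygamma m has_field_derivative cot_polygamma (Suc m) y) (at y)"
proof -
  have "y / pi > 0" "1 - y / pi > 0" using assms by (auto simp: field_simps)
  then have "(cot_polygamma m has_field_derivative 1 / pi ^ (m + 1)
      * ((-1) ^ m * (Polygamma (Suc m) (1 - y / pi) * (- (1 / pi))) - Polygamma (Suc m) (y / pi) * (1 / pi))) (at y)"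
    unfolding cot_polygamma_def by (auto intro!: derivative_eq_intros pos_notin_nonpos_Ints)
  then show ?thesis
    by (simp add: cot_polygamma_def field_simps)
qed

lemma iter_deriv_cot_eq_cot_polygamma:
  assumes "0 < y" "y < pi"
  shows "(deriv ^^ m) cot y = cot_polygamma m y"
  using assms
proof (induction m arbitrary: y)
  case 0
  have "pi * cot (pi * (y / pi)) = Digamma (1 - y / pi) - Digamma (y / pi)"
    using 0 by (intro pi_cot_eq_Digamma) (auto simp: field_simps)
  then show ?case by (simp add: cot_polygamma_def field_simps)
next
  case (Suc m)
  have "eventually (\<lambda>t. t \<in> {0<..<pi}) (nhds y)"
    using Suc.prems by (intro eventually_nhds_in_open) auto
  then have "eventually (\<lambda>t. (deriv ^^ m) cot t = cot_polygamma m t) (nhds y)"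
    by eventually_elim (use Suc.IH in auto)
  then have "deriv ((deriv ^^ m) cot) y = deriv (cot_polygamma m) y"
    by (intro deriv_cong_ev) auto
  also have "\<dots> = cot_polygamma (Suc m) y"
    by (rule DERIV_imp_deriv[OF cot_polygamma_has_field_derivative[OF Suc.prems]])
  finally show ?case by simp
qed

definition hurwitz_sum :: "nat \<Rightarrow> real \<Rightarrow> real" where
  "hurwitz_sum p z = (\<Sum>j. inverse ((z + real j) ^ p))"

lemma summable_hurwitz_sum: "z > 0 \<Longrightarrow> p \<ge> 2 \<Longrightarrow> summable (\<lambda>j. inverse ((z + real j) ^ p))"
  using Polygamma_converges'[of z p] by simp

lemma abs_Polygamma_eq_hurwitz_sum:
  assumes "m \<ge> 1" "z > 0"
  shows "\<bar>Polygamma m z\<bar> = fact m * hurwitz_sum (Suc m) z"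
proof -
  have "hurwitz_sum (Suc m) z \<ge> 0"
    unfolding hurwitz_sum_def using assms by (intro suminf_nonneg summable_hurwitz_sum) auto
  moreover have "Polygamma m z = (-1) ^ Suc m * fact m * hurwitz_sum (Suc m) z"
    using assms unfolding Polygamma_def hurwitz_sum_def by simp
  ultimately show ?thesis by (simp add: abs_mult)
qed

lemma abs_iter_deriv_cot_le:
  assumes "m \<ge> 1" "0 < y" "y < pi"
  shows "\<bar>(deriv ^^ m) cot y\<bar>
           \<le> fact m / pi ^ (m + 1) * (hurwitz_sum (Suc m) (1 - y / pi) + hurwitz_sum (Suc m) (y / pi))"
proof -
  have "y / pi > 0" "1 - y / pi > 0" using assms by (auto simp: field_simps)
  have "\<bar>(-1) ^ m * Polygamma m (1 - y / pi) - Polygamma m (y / pi)\<bar>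
      \<le> \<bar>Polygamma m (1 - y / pi)\<bar> + \<bar>Polygamma m (y / pi)\<bar>"
    by (rule order_trans[OF abs_triangle_ineq4]) (simp add: abs_mult)
  moreover have "\<bar>cot_polygamma m y\<bar>
      = 1 / pi ^ (m + 1) * \<bar>(-1) ^ m * Polygamma m (1 - y / pi) - Polygamma m (y / pi)\<bar>"
    by (simp add: cot_polygamma_def abs_mult)
  ultimately have "\<bar>cot_polygamma m y\<bar>
      \<le> 1 / pi ^ (m + 1) * (\<bar>Polygamma m (1 - y / pi)\<bar> + \<bar>Polygamma m (y / pi)\<bar>)"
    by (metis mult_left_mono pi_ge_zero zero_le_divide_1_iff zero_le_power)
  then show ?thesis
    using abs_Polygamma_eq_hurwitz_sum[OF assms(1) \<open>y / pi > 0\<close>]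
      abs_Polygamma_eq_hurwitz_sum[OF assms(1) \<open>1 - y / pi > 0\<close>]
    by (simp add: iter_deriv_cot_eq_cot_polygamma[OF assms(2,3)] field_simps)
qed

section \<open>Sums over residue classes\<close>

definition zeta_residue_class :: "nat \<Rightarrow> nat \<Rightarrow> nat \<Rightarrow> real" where
  "zeta_residue_class k p r = (\<Sum>j. inverse (real (r + j * k) ^ p))"

lemma hurwitz_sum_of_ratio:
  assumes "k \<ge> 1" "r \<ge> 1" "p \<ge> 2"
  shows "hurwitz_sum p (real r / real k) = real k ^ p * zeta_residue_class k p r"
    and "summable (\<lambda>j. inverse (real (r + j * k) ^ p))"
proof -
  have k: "real k > 0" using assms by simp
  have summand: "inverse (real (r + j * k) ^ p) = inverse (real k ^ p) * inverse ((real r / real k + real j) ^ p)" for j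
  proof -
    have "real r / real k + real j = real (r + j * k) / real k" using k by (simp add: field_simps)
    then show ?thesis using k by (simp add: power_divide field_simps)
  qed
  have summable: "summable (\<lambda>j. inverse ((real r / real k + real j) ^ p))"
    using assms k by (intro summable_hurwitz_sum) auto
  then show "summable (\<lambda>j. inverse (real (r + j * k) ^ p))"
    unfolding summand by (rule summable_mult)
  have "zeta_residue_class k p r = inverse (real k ^ p) * hurwitz_sum p (real r / real k)"
    unfolding zeta_residue_class_def hurwitz_sum_def summand by (rule suminf_mult[OF summable])
  then show "hurwitz_sum p (real r / real k) = real k ^ p * zeta_residue_class k p r"
    using k by simp
qed

lemma sum_zeta_residue_class:
  assumes "k \<ge> 1" "p \<ge> 2"
  shows "(\<Sum>r=1..k. zeta_residue_class k p r) = zeta_nat p"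
proof -
  have "(\<Sum>n\<in>{j * k..<j * k + k}. 1 / real (Suc n) ^ p) = (\<Sum>i<k. inverse (real (Suc i + j * k) ^ p))" for j
    using sum.shift_bounds_nat_ivl[of "\<lambda>n. 1 / real (Suc n) ^ p" 0 "j * k" k]
    by (simp add: add.commute atLeast0LessThan inverse_eq_divide)
  then have "(\<lambda>j. \<Sum>i<k. inverse (real (Suc i + j * k) ^ p)) sums zeta_nat p"
    using sums_group[OF zeta_nat_sums[OF assms(2)], of k] assms by simp
  then have "zeta_nat p = (\<Sum>j. \<Sum>i<k. inverse (real (Suc i + j * k) ^ p))"
    by (simp add: sums_iff)
  also have "\<dots> = (\<Sum>i<k. \<Sum>j. inverse (real (Suc i + j * k) ^ p))"
    using assms by (intro suminf_sum hurwitz_sum_of_ratio(2)) auto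
  finally show ?thesis
    using sum.atLeast1_atMost_eq[of "zeta_residue_class k p" k] by (simp add: zeta_residue_class_def)
qed

lemma zeta_residue_class_self:
  assumes "p \<ge> 2"
  shows "zeta_residue_class k p k = zeta_nat p / real k ^ p"
proof -
  have "inverse (real (k + j * k) ^ p) = inverse (real k ^ p) * (1 / real (Suc j) ^ p)" for j
  proof -
    have "real (k + j * k) = real k * real (Suc j)" by (simp add: algebra_simps)
    then show ?thesis by (simp add: power_mult_distrib divide_inverse)
  qed
  then have "zeta_residue_class k p k = (\<Sum>j. inverse (real k ^ p) * (1 / real (Suc j) ^ p))"
    unfolding zeta_residue_class_def by simp
  also have "\<dots> = inverse (real k ^ p) * zeta_nat p"
    unfolding zeta_nat_def using assms by (intro suminf_mult summable_inverse_power_Suc)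
  finally show ?thesis by (simp add: field_simps)
qed

lemma sum_zeta_residue_class_nonzero:
  assumes "k \<ge> 1" "p \<ge> 2"
  shows "(\<Sum>r=1..k-1. zeta_residue_class k p r) = zeta_nat p - zeta_nat p / real k ^ p"
proof -
  have "{1..k} = insert k {1..k-1}" "k \<notin> {1..k-1}" using assms by auto
  then show ?thesis
    using sum_zeta_residue_class[OF assms] zeta_residue_class_self[OF assms(2), of k] by simp
qed

lemma bij_betw_mult_mod:
  fixes h k :: nat
  assumes "coprime h k"
  shows "bij_betw (\<lambda>d. d * h mod k) {1..k-1} {1..k-1}"
proof -
  have "inj_on (\<lambda>d. d * h mod k) {1..k-1}"
  proof (rule inj_onI)
    have ordered: "a = b" if "b \<le> a" "a < k" "a * h mod k = b * h mod k" for a b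
    proof (rule ccontr)
      assume "a \<noteq> b"
      have "k dvd (a - b) * h"
        using that mod_eq_dvd_iff_nat[of "b * h" "a * h" k] by (simp add: diff_mult_distrib)
      then have "k dvd a - b"
        using assms by (simp add: coprime_commute coprime_dvd_mult_left_iff)
      moreover have "0 < a - b" "a - b < k" using that \<open>a \<noteq> b\<close> by auto
      ultimately show False by (auto dest: dvd_imp_le)
    qed
    fix a b assume ab: "a \<in> {1..k-1}" "b \<in> {1..k-1}" and eq: "a * h mod k = b * h mod k"
    then have "a < k" "b < k" by auto
    with eq show "a = b"
      by (metis nat_le_linear ordered)
  qed
  moreover have "(\<lambda>d. d * h mod k) ` {1..k-1} \<subseteq> {1..k-1}"
  proof
    fix y assume "y \<in> (\<lambda>d. d * h mod k) ` {1..k-1}"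
    then obtain d where d: "1 \<le> d" "d \<le> k - 1" "y = d * h mod k" by auto
    have "\<not> k dvd d * h"
      using d assms by (auto simp: coprime_commute coprime_dvd_mult_left_iff dest: dvd_imp_le)
    then have "y \<noteq> 0" using d by (simp add: dvd_eq_mod_eq_0)
    moreover have "y < k" using d by simp
    ultimately show "y \<in> {1..k-1}" by auto
  qed
  ultimately show ?thesis
    by (simp add: bij_betw_def endo_inj_surj)
qed

lemma cot_deriv_eq_mod:
  fixes d h k :: nat
  assumes "k \<ge> 1"
  shows "cot_deriv m (pi * real d * real h / real k) = (deriv ^^ m) cot (pi * real (d * h mod k) / real k)"
proof -
  have "real (d * h) = real (d * h mod k) + real (d * h div k) * real k"
    by (metis div_mult_mod_eq of_nat_add of_nat_mult add.commute)
  then have "pi * real d * real h / real k = pi * real (d * h mod k) / real k + real (d * h div k) * pi"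
    using assms by (simp add: field_simps)
  then show ?thesis
    unfolding cot_deriv_def by (simp only: iter_deriv_cot_add_pi_multiple)
qed

lemma abs_iter_deriv_cot_residue_le:
  assumes "p \<ge> 2" "1 \<le> r" "r < k"
  shows "\<bar>(deriv ^^ (p - 1)) cot (pi * real r / real k)\<bar>
           \<le> fact (p - 1) / pi ^ p * real k ^ p * (zeta_residue_class k p (k - r) + zeta_residue_class k p r)"
proof -
  have y: "0 < pi * real r / real k" "pi * real r / real k < pi"
    using assms by (auto simp: field_simps)
  have "1 - pi * real r / real k / pi = real (k - r) / real k" "pi * real r / real k / pi = real r / real k"
    using assms by (auto simp: field_simps of_nat_diff)
  moreover have "p - 1 + 1 = p" "Suc (p - 1) = p" "p - 1 \<ge> 1"
    using assms by auto
  ultimately have "\<bar>(deriv ^^ (p - 1)) cot (pi * real r / real k)\<bar>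
      \<le> fact (p - 1) / pi ^ p * (hurwitz_sum p (real (k - r) / real k) + hurwitz_sum p (real r / real k))"
    using abs_iter_deriv_cot_le[of "p - 1", OF _ y] by metis
  moreover have "hurwitz_sum p (real (k - r) / real k) = real k ^ p * zeta_residue_class k p (k - r)"
    and "hurwitz_sum p (real r / real k) = real k ^ p * zeta_residue_class k p r"
    using assms by (intro hurwitz_sum_of_ratio(1); simp)+
  ultimately show ?thesis
    by (simp only: algebra_simps)
qed

text \<open>Together the classes of \<open>r\<close> and \<open>k - r\<close>, \<open>0 < r < k\<close>, cover every positive integer not
  divisible by \<open>k\<close> twice.\<close>

lemma sum_abs_cot_deriv_le:
  assumes "p \<ge> 2" "k \<ge> 1" "coprime h k"
  shows "(\<Sum>d=1..k-1. \<bar>cot_deriv (p - 1) (pi * real d * real h / real k)\<bar>)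
           \<le> 2 * fact (p - 1) / pi ^ p * (real k ^ p - 1) * zeta_nat p"
proof -
  define c where "c r = \<bar>(deriv ^^ (p - 1)) cot (pi * real r / real k)\<bar>" for r
  define T where "T = zeta_residue_class k p"
  have "(\<Sum>d=1..k-1. \<bar>cot_deriv (p - 1) (pi * real d * real h / real k)\<bar>) = (\<Sum>d=1..k-1. c (d * h mod k))"
    by (simp add: c_def cot_deriv_eq_mod[OF assms(2)])
  also have "\<dots> = (\<Sum>r=1..k-1. c r)"
    using sum.reindex_bij_betw[OF bij_betw_mult_mod[OF assms(3)], of c] by simp
  also have "\<dots> \<le> (\<Sum>r=1..k-1. fact (p - 1) / pi ^ p * real k ^ p * (T (k - r) + T r))"
    unfolding c_def T_def using assms(1) by (intro sum_mono abs_iter_deriv_cot_residue_le) auto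
  also have "\<dots> = fact (p - 1) / pi ^ p * real k ^ p * ((\<Sum>r=1..k-1. T (k - r)) + (\<Sum>r=1..k-1. T r))"
    by (simp only: sum.distrib[symmetric] sum_distrib_left)
  also have "(\<Sum>r=1..k-1. T (k - r)) = (\<Sum>r=1..k-1. T r)"
    using sum.atLeastAtMost_rev[of T 1 "k - 1"] assms(2) by simp
  also have "(\<Sum>r=1..k-1. T r) = zeta_nat p - zeta_nat p / real k ^ p"
    unfolding T_def by (rule sum_zeta_residue_class_nonzero[OF assms(2,1)])
  also have "fact (p - 1) / pi ^ p * real k ^ p * ((zeta_nat p - zeta_nat p / real k ^ p)
      + (zeta_nat p - zeta_nat p / real k ^ p)) = 2 * fact (p - 1) / pi ^ p * (real k ^ p - 1) * zeta_nat p"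
    using assms(2) by (simp add: field_simps)
  finally show ?thesis .
qed

lemma abs_bernoulli_cot_sum_le:
  assumes "p \<ge> 2" "k \<ge> 1" "coprime h k"
  shows "\<bar>\<Sum>d=1..k-1. bernoulli_poly (p + 2) (real d / real k) * cot_deriv (p - 1) (pi * real d * real h / real k)\<bar>
           \<le> 2 * fact (p + 2) / (2 * pi) ^ (p + 2) * zeta_nat (p + 2)
              * (2 * fact (p - 1) / pi ^ p * (real k ^ p - 1) * zeta_nat p)"
proof -
  define \<beta> where "\<beta> = 2 * fact (p + 2) / (2 * pi) ^ (p + 2) * zeta_nat (p + 2)"
  have "\<bar>\<Sum>d=1..k-1. bernoulli_poly (p + 2) (real d / real k) * cot_deriv (p - 1) (pi * real d * real h / real k)\<bar>
      \<le> (\<Sum>d=1..k-1. \<beta> * \<bar>cot_deriv (p - 1) (pi * real d * real h / real k)\<bar>)"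
  proof (intro order_trans[OF sum_abs] sum_mono)
    fix d assume "d \<in> {1..k-1}"
    then have "0 \<le> real d / real k" "real d / real k \<le> 1"
      by (auto simp: field_simps)
    then show "\<bar>bernoulli_poly (p + 2) (real d / real k) * cot_deriv (p - 1) (pi * real d * real h / real k)\<bar>
        \<le> \<beta> * \<bar>cot_deriv (p - 1) (pi * real d * real h / real k)\<bar>"
      unfolding abs_mult \<beta>_def using assms by (intro mult_right_mono abs_bernoulli_poly_le) auto
  qed
  also have "\<dots> \<le> \<beta> * (2 * fact (p - 1) / pi ^ p * (real k ^ p - 1) * zeta_nat p)"
    unfolding sum_distrib_left[symmetric] using assms
    by (intro mult_left_mono sum_abs_cot_deriv_le) (auto simp: \<beta>_def zeta_nat_nonneg)
  finally show ?thesis unfolding \<beta>_def .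
qed

lemma norm_v_coeff_bracket_le:
  assumes "p \<ge> 2" "k \<ge> 1" "coprime h k"
  shows "norm (complex_of_real (bernoulli_num (p + 2) * bernoulli_num p)
           + of_nat p / (2 * \<i>) ^ p *
             complex_of_real (\<Sum>d = 1..k - 1. bernoulli_poly (p + 2) (real d / real k) *
                                 cot_deriv (p - 1) (pi * real d * real h / real k)))
         \<le> 2 * fact (p + 2) / (2 * pi) ^ (p + 2) * zeta_nat (p + 2) * (2 * fact p / (2 * pi) ^ p)
            * zeta_nat p * real k ^ p"
    (is "norm (?B + _ * complex_of_real ?S) \<le> ?\<beta> * ?c * ?Z * _")
proof -
  have "\<bar>bernoulli_num (p + 2)\<bar> \<le> ?\<beta>" "\<bar>bernoulli_num p\<bar> \<le> ?c * ?Z"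
    using abs_bernoulli_poly_le[of "p + 2" 0] abs_bernoulli_poly_le[of p 0] assms(1) by simp_all
  then have "\<bar>bernoulli_num (p + 2) * bernoulli_num p\<bar> \<le> ?\<beta> * (?c * ?Z)"
    unfolding abs_mult by (rule mult_mono) (auto simp: zeta_nat_nonneg)
  moreover have "real p / 2 ^ p * \<bar>?S\<bar> \<le> ?\<beta> * ?c * (real k ^ p - 1) * ?Z"
  proof -
    have "real p / 2 ^ p * \<bar>?S\<bar>
        \<le> real p / 2 ^ p * (?\<beta> * (2 * fact (p - 1) / pi ^ p * (real k ^ p - 1) * ?Z))"
      by (intro mult_left_mono abs_bernoulli_cot_sum_le assms) simp
    also have "\<dots> = ?\<beta> * (real p / 2 ^ p * (2 * fact (p - 1) / pi ^ p)) * (real k ^ p - 1) * ?Z"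
      by (simp only: ac_simps)
    also have "real p / 2 ^ p * (2 * fact (p - 1) / pi ^ p) = ?c"
      using assms(1) by (simp add: fact_reduce[of p] power_mult_distrib field_simps)
    finally show ?thesis .
  qed
  moreover have "norm (of_nat p / (2 * \<i>) ^ p * complex_of_real ?S) = real p / 2 ^ p * \<bar>?S\<bar>"
    by (simp only: norm_mult norm_divide norm_power norm_of_real norm_of_nat norm_numeral norm_ii mult_1_right)
  moreover have "x * (y * z) + x * y * (K - 1) * z = x * y * z * K" for x y z K :: real
    by (simp add: algebra_simps)
  ultimately show ?thesis
    using norm_triangle_ineq[of ?B "of_nat p / (2 * \<i>) ^ p * complex_of_real ?S"]
    unfolding norm_of_real by (smt (verit))
qed

lemma v_coeff_bound_constant:
  fixes Z Z' :: real and k p :: nat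
  assumes "p \<ge> 1"
  shows "\<bar>(-1) ^ p * real k ^ (1 + p) / (fact p * real p * real (p + 2))\<bar>
           * (2 * fact (p + 2) / (2 * pi) ^ (p + 2) * Z' * (2 * fact p / (2 * pi) ^ p) * Z * real k ^ p)
         = 4 * real k ^ (2 * p + 1) * fact (p + 1) / (real p * (2 * pi) ^ (2 * p + 2)) * Z * Z'"
proof -
  have abs_A: "\<bar>(-1) ^ p * real k ^ (1 + p) / (fact p * real p * real (p + 2))\<bar>
      = real k ^ (1 + p) / (fact p * real p * real (p + 2))"
    by (simp add: abs_mult)
  have fact_eq: "fact (p + 2) = real (p + 2) * (fact (p + 1) :: real)"
    by (simp add: algebra_simps)
  have "2 * p + 1 = (1 + p) + p" "2 * p + 2 = (p + 2) + p"
    by simp_all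
  then have powers: "real k ^ (2 * p + 1) = real k ^ (1 + p) * real k ^ p"
    "(2 * pi) ^ (2 * p + 2) = (2 * pi) ^ (p + 2) * (2 * pi) ^ p"
    by (simp_all only: power_add)
  have general: "a / (F * P * d) * (2 * (d * F1) / q1 * Z' * (2 * F / q2) * Z * b)
      = 4 * (a * b) * F1 / (P * (q1 * q2)) * Z * Z'"
    if "F \<noteq> 0" "P \<noteq> 0" "d \<noteq> 0" "q1 \<noteq> 0" "q2 \<noteq> 0" for a b F F1 d P q1 q2 :: real
    using that by (simp add: field_simps)
  show ?thesis
    unfolding abs_A fact_eq powers by (rule general) (use assms in auto)
qed

theorem mainTheorem8:
  fixes p k h :: nat
  assumes "p \<ge> 2" and "k \<ge> 1" and "h < k" and "gcd h k = 1"
  shows "norm (v_coeff p h k)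
           \<le> 4 * real k ^ (2 * p + 1) * fact (p + 1) / (real p * (2 * pi) ^ (2 * p + 2))
              * zeta_nat p * zeta_nat (p + 2)"
proof -
  have "coprime h k"
    using assms(4) by (simp add: coprime_iff_gcd_eq_1)
  then have "norm (v_coeff p h k)
      \<le> \<bar>(-1) ^ p * real k ^ (1 + p) / (fact p * real p * real (p + 2))\<bar>
         * (2 * fact (p + 2) / (2 * pi) ^ (p + 2) * zeta_nat (p + 2) * (2 * fact p / (2 * pi) ^ p)
            * zeta_nat p * real k ^ p)"
    unfolding v_coeff_def norm_mult norm_of_real
    by (intro mult_left_mono norm_v_coeff_bracket_le assms(1,2)) simp_all
  also have "\<dots> = 4 * real k ^ (2 * p + 1) * fact (p + 1) / (real p * (2 * pi) ^ (2 * p + 2))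
      * zeta_nat p * zeta_nat (p + 2)"
    by (rule v_coeff_bound_constant) (use assms(1) in simp)
  finally show ?thesis .
qed

end
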